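(* Let $\mathcal T_p$ be a Tarski monster, $X$ a finite generating system of $\mathcal T_p$, $\mathcal K$ a proper non-trivial subgroup and $\Gamma=\mathrm{Sch}(\mathcal T_p,\mathcal K,X)$. Then the group $\mathrm{Aut}_X(\Gamma)$ of label-preserving automorphisms of $\Gamma$ is trivial and each orbit of $\mathrm{Aut}(\Gamma)$ on vertices is finite. In particular, $\Gamma$ is not almost transitive, and Tarski monsters are strongly simple.
   Context: For a prime $p$, a Tarski monster $\mathcal T_p$ is an infinite group every proper non-trivial subgroup of which is cyclic of order $p$. The Schreier graph $\mathrm{Sch}(\mathcal A,\mathcal K,X)$ has vertices the right cosets $\mathcal Kg$ and, for each coset and each $x$ with $x\in X$ or $x^{-1}\in X$, an edge labeled $x$ from $\mathcal Kg$ to $\mathcal Kgx$ whose inverse is the edge labeled $x^{-1}$ from $\mathcal Kgx$. $\mathrm{Aut}(\Gamma)$ is the group of all graph automorphisms (ignoring labels). A graph is almost transitive if there is a finite set $V_0$ of vertices such that every vertex can be mapped into $V_0$ by an automorphism. A finitely generated group $\mathcal A$ is strongly simple if for every generating system $X$ of size at most $\mathrm{rank}(\mathcal A)+1$ (rank = minimal number of generators) and every proper non-trivial subgroup $\mathcal H$, $\mathrm{Sch}(\mathcal A,\mathcal H,X)$ is not vertex-transitive. *)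

theory Defs
  imports "HOL-Algebra.Coset" "HOL-Algebra.Generated_Groups" "HOL-Computational_Algebra.Primes"
begin

definition tarski_monster :: "('a, 'b) monoid_scheme \<Rightarrow> nat \<Rightarrow> bool" where
  "tarski_monster G p \<longleftrightarrow> group G \<and> Factorial_Ring.prime p \<and> infinite (carrier G) \<and>
     (\<forall>H. subgroup H G \<and> H \<noteq> {\<one>\<^bsub>G\<^esub>} \<and> H \<noteq> carrier G \<longrightarrow>
        card H = p \<and> (\<exists>g\<in>carrier G. H = generate G {g}))"

definition gen_system :: "('a, 'b) monoid_scheme \<Rightarrow> 'a set \<Rightarrow> bool" where
  "gen_system G X \<longleftrightarrow> X \<subseteq> carrier G \<and> generate G X = carrier G"

definition fin_generated :: "('a, 'b) monoid_scheme \<Rightarrow> bool" where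
  "fin_generated G \<longleftrightarrow> (\<exists>X. finite X \<and> gen_system G X)"

definition group_rank :: "('a, 'b) monoid_scheme \<Rightarrow> nat" where
  "group_rank G = (LEAST n. \<exists>X. finite X \<and> gen_system G X \<and> card X = n)"

(* Edges: pairs (C, x), C a vertex, x a label; the edge (C,x) goes from C to C x,
   carries label x, and its inverse edge is (C x, x^{-1}). *)
definition sch_V :: "('a, 'b) monoid_scheme \<Rightarrow> 'a set \<Rightarrow> 'a set set" where
  "sch_V G K = rcosets\<^bsub>G\<^esub> K"

definition sch_labels :: "('a, 'b) monoid_scheme \<Rightarrow> 'a set \<Rightarrow> 'a set" where
  "sch_labels G X = {x \<in> carrier G. x \<in> X \<or> inv\<^bsub>G\<^esub> x \<in> X}"

definition sch_E :: "('a, 'b) monoid_scheme \<Rightarrow> 'a set \<Rightarrow> 'a set \<Rightarrow> ('a set \<times> 'a) set" where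
  "sch_E G K X = sch_V G K \<times> sch_labels G X"

definition sch_orig :: "'a set \<times> 'a \<Rightarrow> 'a set" where
  "sch_orig e = fst e"

definition sch_term :: "('a, 'b) monoid_scheme \<Rightarrow> 'a set \<times> 'a \<Rightarrow> 'a set" where
  "sch_term G e = fst e #>\<^bsub>G\<^esub> snd e"

definition sch_rev :: "('a, 'b) monoid_scheme \<Rightarrow> 'a set \<times> 'a \<Rightarrow> 'a set \<times> 'a" where
  "sch_rev G e = (fst e #>\<^bsub>G\<^esub> snd e, inv\<^bsub>G\<^esub> snd e)"

definition sch_label :: "'a set \<times> 'a \<Rightarrow> 'a" where
  "sch_label e = snd e"

(* Aut(Sch): all graph automorphisms (labels ignored): a bijection f of the
   vertices and a bijection h of the edges compatible with origin and with
   edge inversion (hence also with terminus). *)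
definition sch_aut :: "('a, 'b) monoid_scheme \<Rightarrow> 'a set \<Rightarrow> 'a set \<Rightarrow>
    (('a set \<Rightarrow> 'a set) \<times> ('a set \<times> 'a \<Rightarrow> 'a set \<times> 'a)) set" where
  "sch_aut G K X = {(f, h). bij_betw f (sch_V G K) (sch_V G K) \<and>
      bij_betw h (sch_E G K X) (sch_E G K X) \<and>
      (\<forall>e\<in>sch_E G K X. sch_orig (h e) = f (sch_orig e) \<and>
                        sch_rev G (h e) = h (sch_rev G e))}"

definition sch_aut_lab :: "('a, 'b) monoid_scheme \<Rightarrow> 'a set \<Rightarrow> 'a set \<Rightarrow>
    (('a set \<Rightarrow> 'a set) \<times> ('a set \<times> 'a \<Rightarrow> 'a set \<times> 'a)) set" where
  "sch_aut_lab G K X = {(f, h) \<in> sch_aut G K X.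
      \<forall>e\<in>sch_E G K X. sch_label (h e) = sch_label e}"

definition sch_orbit :: "('a, 'b) monoid_scheme \<Rightarrow> 'a set \<Rightarrow> 'a set \<Rightarrow> 'a set \<Rightarrow> 'a set set" where
  "sch_orbit G K X v = {f v | f h. (f, h) \<in> sch_aut G K X}"

definition sch_vertex_transitive :: "('a, 'b) monoid_scheme \<Rightarrow> 'a set \<Rightarrow> 'a set \<Rightarrow> bool" where
  "sch_vertex_transitive G K X \<longleftrightarrow>
     (\<forall>v\<in>sch_V G K. \<forall>w\<in>sch_V G K. \<exists>(f, h)\<in>sch_aut G K X. f v = w)"

definition sch_almost_transitive :: "('a, 'b) monoid_scheme \<Rightarrow> 'a set \<Rightarrow> 'a set \<Rightarrow> bool" where
  "sch_almost_transitive G K X \<longleftrightarrow>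
     (\<exists>V0. finite V0 \<and> V0 \<subseteq> sch_V G K \<and>
        (\<forall>v\<in>sch_V G K. \<exists>(f, h)\<in>sch_aut G K X. f v \<in> V0))"

definition strongly_simple :: "('a, 'b) monoid_scheme \<Rightarrow> bool" where
  "strongly_simple G \<longleftrightarrow> fin_generated G \<and>
     (\<forall>X H. finite X \<and> gen_system G X \<and> card X \<le> group_rank G + 1 \<and>
        subgroup H G \<and> H \<noteq> {\<one>\<^bsub>G\<^esub>} \<and> H \<noteq> carrier G \<longrightarrow>
        \<not> sch_vertex_transitive G H X)"

end

theory Submission
  imports Defs "HOL-Algebra.Multiplicative_Group" "HOL-Algebra.Group_Action"
    "HOL-Algebra.SndIsomorphismGrp"
begin

text \<open>
  A label-preserving automorphism of \<open>Sch(G, K, X)\<close> commutes with right multiplication by labels,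
  hence by all of \<open>G\<close>, so it is determined by the image \<open>K t\<close> of the base vertex; as \<open>K k = K\<close>
  for \<open>k \<in> K\<close>, the element \<open>t\<close> conjugates \<open>K\<close> into itself. In a Tarski monster \<open>K\<close> is malnormal:
  a nontrivial intersection \<open>K \<inter> t K t\<inverse>\<close> has order \<open>p\<close>, so \<open>t\<close> normalises \<open>K\<close>, and the normaliser
  of the non-normal subgroup \<open>K\<close> is \<open>K\<close> itself. So \<open>t \<in> K\<close> and the automorphism is trivial.

  For the orbits, choose \<open>r\<close> such that a nontrivial element of \<open>K\<close> is a product of at most \<open>r\<close>
  labels. A vertex \<open>K g\<close> whose \<open>r\<close>-ball is smaller than the \<open>r\<close>-ball of the Cayley graph satisfies
  \<open>g c g\<inverse> \<in> K\<close> for some short nontrivial \<open>c\<close>, and by malnormality each \<open>c\<close> allows at most one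
  coset; so these vertices form a finite set \<open>S\<close> containing \<open>K\<close>. Graph automorphisms preserve
  ball sizes, hence map \<open>S\<close> into itself, and so move a vertex at distance \<open>d\<close> from \<open>K\<close> into the
  finite union of the \<open>d\<close>-balls around \<open>S\<close>. Finite orbits in an infinite graph rule out almost
  transitivity.
\<close>

section \<open>Tarski monsters\<close>

lemma tarski_monster_group: "tarski_monster G p \<Longrightarrow> group G"
  unfolding tarski_monster_def by blast

context group
begin

lemma tarski_monster_infinite: "tarski_monster G p \<Longrightarrow> infinite (carrier G)"
  unfolding tarski_monster_def by blast

lemma tarski_monster_subgroup_card:
  assumes "tarski_monster G p" "subgroup H G" "H \<noteq> {\<one>}" "H \<noteq> carrier G"
  shows "finite H" "card H = p"
  using assms unfolding tarski_monster_def by (auto simp: prime_gt_0_nat dest: card_ge_0_finite)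

lemma tarski_monster_subgroup_eq:
  assumes tm: "tarski_monster G p" and H: "subgroup H G" "H \<subseteq> K" "H \<noteq> {\<one>}"
    and K: "subgroup K G" "K \<noteq> carrier G"
  shows "H = K"
proof -
  have "H \<noteq> carrier G" using H(2) K subgroup.subset by blast
  then have "card H = p" using tarski_monster_subgroup_card[OF tm H(1,3)] by blast
  moreover have "K \<noteq> {\<one>}" using H subgroup.one_closed by blast
  then have "finite K" "card K = p" using tarski_monster_subgroup_card[OF tm K(1) _ K(2)] by auto
  ultimately show ?thesis using H(2) card_subset_eq by metis
qed

lemma tarski_monster_finite_generate:
  assumes tm: "tarski_monster G p" and K: "subgroup K G" "K \<noteq> {\<one>}" "K \<noteq> carrier G"
    and a: "a \<in> carrier G"
  shows "finite (generate G {a})"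
proof -
  have gen: "carrier (subgroup_generated G {x}) = generate G {x}" if "x \<in> carrier G" for x
    using that by (simp add: carrier_subgroup_generated)
  show ?thesis
  proof (cases "generate G {a} = carrier G")
    case True
    obtain k where k: "k \<in> K" "k \<noteq> \<one>" using K(2) subgroup.one_closed[OF K(1)] by blast
    have kc: "k \<in> carrier G" using subgroup.mem_carrier[OF K(1) k(1)] .
    have "generate G {k} \<subseteq> K" using generate_subgroup_incl[OF _ K(1)] k(1) by simp
    then have "finite (generate G {k})"
      using tarski_monster_subgroup_card(1)[OF tm K] finite_subset by blast
    then obtain i :: int where i: "i \<noteq> 0" "k [^] i = \<one>"
      using finite_cyclic_subgroup_int[OF kc] gen[OF kc] by metis
    have "k \<in> generate G {a}" using True kc by simp
    then obtain j :: int where j: "k = a [^] j" unfolding generate_pow[OF a] by blast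
    have "j \<noteq> 0" using j k(2) by auto
    then have "a [^] (j * i) = \<one>" "j * i \<noteq> 0" using i j a by (simp_all add: int_pow_pow)
    then show ?thesis using finite_cyclic_subgroup_int[OF a] gen[OF a] by metis
  next
    case False
    then show ?thesis
      using tarski_monster_subgroup_card(1)[OF tm generate_is_subgroup _ False] a
      by (cases "generate G {a} = {\<one>}") auto
  qed
qed

lemma tarski_monster_not_normal:
  assumes tm: "tarski_monster G p" and K: "subgroup K G" "K \<noteq> {\<one>}" "K \<noteq> carrier G"
  shows "\<not> K \<lhd> G"
proof
  assume "K \<lhd> G"
  obtain a where a: "a \<in> carrier G" "a \<notin> K" using K(3) subgroup.subset[OF K(1)] by blast
  define A where "A = generate G {a}"
  have "subgroup A G" unfolding A_def using a by (simp add: generate_is_subgroup)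
  then interpret second_isomorphism_grp K G A
    using \<open>K \<lhd> G\<close> by (simp add: second_isomorphism_grp_def second_isomorphism_grp_axioms_def)
  have "finite A" unfolding A_def by (rule tarski_monster_finite_generate[OF tm K a(1)])
  then have "finite (K <#> A)"
    using tarski_monster_subgroup_card(1)[OF tm K] by (simp add: set_mult_def)
  then have "K <#> A \<noteq> carrier G" using tarski_monster_infinite[OF tm] by auto
  then have "K = K <#> A"
    using tarski_monster_subgroup_eq[OF tm K(1) H_contained_in_set_mult K(2)
        normal_set_mult_subgroup] by blast
  moreover have "a \<in> A" unfolding A_def by (rule generate.incl) simp
  ultimately show False using S_contained_in_set_mult a(2) by blast
qed

lemma tarski_monster_normalizer_eq:
  assumes tm: "tarski_monster G p" and K: "subgroup K G" "K \<noteq> {\<one>}" "K \<noteq> carrier G"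
  shows "normalizer G K = K"
proof -
  have Kc: "K \<subseteq> carrier G" using subgroup.subset[OF K(1)] .
  have normalizer_iff: "g \<in> normalizer G K \<longleftrightarrow> g \<in> carrier G \<and> g <# K #> inv g = K" for g
    using Kc by (simp add: normalizer_def stabilizer_def)
  have N: "subgroup (normalizer G K) G" by (rule normalizer_imp_subgroup[OF Kc])
  have K_N: "K \<subseteq> normalizer G K"
  proof
    fix k assume "k \<in> K"
    moreover have "k \<in> carrier G" using Kc \<open>k \<in> K\<close> by blast
    ultimately show "k \<in> normalizer G K"
      using normalizer_iff coset_join3[OF _ K(1)] coset_join2[OF _ K(1)] subgroup.m_inv_closed[OF K(1)]
      by simp
  qed
  have "normalizer G K \<noteq> carrier G"
  proof
    assume N_all: "normalizer G K = carrier G"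
    have "x \<otimes> h \<otimes> inv x \<in> K" if "x \<in> carrier G" "h \<in> K" for x h
    proof -
      have "x \<otimes> h \<otimes> inv x \<in> x <# K #> inv x"
        unfolding l_coset_def r_coset_def using that(2) by blast
      moreover have "x <# K #> inv x = K" using normalizer_iff[of x] N_all that(1) by blast
      ultimately show ?thesis by simp
    qed
    then have "K \<lhd> G" using K(1) by (simp add: normal_inv_iff)
    then show False using tarski_monster_not_normal[OF tm K] by blast
  qed
  then show ?thesis using tarski_monster_subgroup_eq[OF tm K(1) K_N K(2) N] by blast
qed

lemma tarski_monster_malnormal:
  assumes tm: "tarski_monster G p" and K: "subgroup K G" "K \<noteq> {\<one>}" "K \<noteq> carrier G"
    and t: "t \<in> carrier G" and u: "u \<in> K" "u \<noteq> \<one>" "t \<otimes> u \<otimes> inv t \<in> K"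
  shows "t \<in> K"
proof -
  have Kc: "K \<subseteq> carrier G" using subgroup.subset[OF K(1)] .
  define Kt where "Kt = t <# K #> inv t"
  have Kt: "subgroup Kt G" unfolding Kt_def by (rule subgroup_conjugation_is_surj2[OF t K(1)])
  have "finite Kt"
    using tarski_monster_subgroup_card(1)[OF tm K] by (simp add: Kt_def l_coset_def r_coset_def)
  then have Kt_proper: "Kt \<noteq> carrier G" using tarski_monster_infinite[OF tm] by auto
  have "t \<otimes> u \<otimes> inv t \<in> Kt" unfolding Kt_def l_coset_def r_coset_def using u(1) by blast
  moreover have "t \<otimes> u \<otimes> inv t \<noteq> \<one>"
  proof
    assume "t \<otimes> u \<otimes> inv t = \<one>"
    also have "\<one> = t \<otimes> \<one> \<otimes> inv t" using t by simp
    finally show False using conjugation_is_inj[OF t _ one_closed] u(1,2) Kc by blast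
  qed
  ultimately have "K \<inter> Kt \<noteq> {\<one>}" using u(3) by blast
  then have "K \<inter> Kt = K"
    using tarski_monster_subgroup_eq[OF tm subgroups_Inter_pair[OF K(1) Kt] _ _ K(1,3)] by blast
  then have "K = Kt"
    using tarski_monster_subgroup_eq[OF tm K(1) _ K(2) Kt Kt_proper] by blast
  then have "t \<in> normalizer G K"
    using t Kc unfolding Kt_def by (simp add: normalizer_def stabilizer_def)
  then show ?thesis using tarski_monster_normalizer_eq[OF tm K] by simp
qed

lemma rcos_eq_iff_mult_inv_mem:
  assumes H: "subgroup H G" and x: "x \<in> carrier G" and y: "y \<in> carrier G"
  shows "H #> x = H #> y \<longleftrightarrow> x \<otimes> inv y \<in> H"
proof
  assume "H #> x = H #> y"
  then have "H #> (x \<otimes> inv y) = H" by (rule coset_mult_inv2[OF _ x y subgroup.subset[OF H]])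
  then show "x \<otimes> inv y \<in> H" using coset_join1[OF _ _ H] x y by simp
next
  assume "x \<otimes> inv y \<in> H"
  then have "H #> (x \<otimes> inv y) = H" using coset_join2[OF _ H] x y by simp
  then show "H #> x = H #> y" by (rule coset_mult_inv1[OF _ x y subgroup.subset[OF H]])
qed

lemma tarski_monster_conj_rcos_eq:
  assumes tm: "tarski_monster G p" and K: "subgroup K G" "K \<noteq> {\<one>}" "K \<noteq> carrier G"
    and g: "g1 \<in> carrier G" "g2 \<in> carrier G" and c: "c \<in> carrier G" "c \<noteq> \<one>"
    and conj: "g1 \<otimes> c \<otimes> inv g1 \<in> K" "g2 \<otimes> c \<otimes> inv g2 \<in> K"
  shows "K #> g1 = K #> g2"
proof -
  define t where "t = g2 \<otimes> inv g1"
  have t: "t \<in> carrier G" unfolding t_def using g by simp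
  have "g1 \<otimes> c \<otimes> inv g1 \<noteq> \<one>"
  proof
    assume "g1 \<otimes> c \<otimes> inv g1 = \<one>"
    also have "\<one> = g1 \<otimes> \<one> \<otimes> inv g1" using g(1) by simp
    finally show False using conjugation_is_inj[OF g(1) c(1) one_closed] c(2) by blast
  qed
  moreover have "t \<otimes> (g1 \<otimes> c \<otimes> inv g1) \<otimes> inv t = g2 \<otimes> c \<otimes> inv g2"
  proof -
    have cancel: "inv g1 \<otimes> (g1 \<otimes> y) = y" if "y \<in> carrier G" for y
      using g(1) that by (simp flip: m_assoc)
    show ?thesis using g c by (simp add: t_def m_assoc inv_mult_group cancel)
  qed
  ultimately have "t \<in> K" using tarski_monster_malnormal[OF tm K t conj(1)] conj(2) by simp
  then show ?thesis using rcos_eq_iff_mult_inv_mem[OF K(1) g(2,1)] unfolding t_def by simp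
qed

lemma tarski_monster_finite_conj_rcosets:
  assumes tm: "tarski_monster G p" and K: "subgroup K G" "K \<noteq> {\<one>}" "K \<noteq> carrier G"
    and C: "finite C" "C \<subseteq> carrier G"
  shows "finite {K #> g | g c. g \<in> carrier G \<and> c \<in> C \<and> c \<noteq> \<one> \<and> g \<otimes> c \<otimes> inv g \<in> K}"
proof -
  define T where "T c = {K #> g | g. g \<in> carrier G \<and> g \<otimes> c \<otimes> inv g \<in> K}" for c
  have "finite (T c)" if c: "c \<in> C - {\<one>}" for c
  proof -
    have "\<exists>\<^sub>\<le>\<^sub>1 v. v \<in> T c"
    proof (rule Uniq_I)
      fix v w assume "v \<in> T c" "w \<in> T c"
      then obtain g1 g2 where "g1 \<in> carrier G" "g1 \<otimes> c \<otimes> inv g1 \<in> K" "v = K #> g1"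
        and "g2 \<in> carrier G" "g2 \<otimes> c \<otimes> inv g2 \<in> K" "w = K #> g2"
        unfolding T_def by blast
      then show "v = w" using tarski_monster_conj_rcos_eq[OF tm K] c C(2) by blast
    qed
    then obtain v0 where "T c \<subseteq> {v0}" using subset_singleton_iff_Uniq[of "T c"] by blast
    then show ?thesis using finite_subset by blast
  qed
  moreover have "{K #> g | g c. g \<in> carrier G \<and> c \<in> C \<and> c \<noteq> \<one> \<and> g \<otimes> c \<otimes> inv g \<in> K} \<subseteq>
      (\<Union>c\<in>C - {\<one>}. T c)"
    unfolding T_def by blast
  ultimately show ?thesis using C(1) by (meson finite_Diff finite_UN_I finite_subset)
qed

end

section \<open>Schreier graphs\<close>

definition sch_nbrs :: "('a, 'b) monoid_scheme \<Rightarrow> 'a set \<Rightarrow> 'a set \<Rightarrow> 'a set set" where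
  "sch_nbrs G X v = (\<lambda>x. v #>\<^bsub>G\<^esub> x) ` sch_labels G X"

primrec sch_ball :: "('a, 'b) monoid_scheme \<Rightarrow> 'a set \<Rightarrow> 'a set \<Rightarrow> nat \<Rightarrow> 'a set set" where
  "sch_ball G X v 0 = {v}"
| "sch_ball G X v (Suc n) = sch_ball G X v n \<union> \<Union> (sch_nbrs G X ` sch_ball G X v n)"

primrec cayley_ball :: "('a, 'b) monoid_scheme \<Rightarrow> 'a set \<Rightarrow> nat \<Rightarrow> 'a set" where
  "cayley_ball G L 0 = {\<one>\<^bsub>G\<^esub>}"
| "cayley_ball G L (Suc n) = cayley_ball G L n \<union> (\<Union>w\<in>cayley_ball G L n. (\<lambda>x. w \<otimes>\<^bsub>G\<^esub> x) ` L)"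

context group
begin

lemma sch_labels_carrier: "sch_labels G X \<subseteq> carrier G"
  unfolding sch_labels_def by blast

lemma sch_labels_inv: "x \<in> sch_labels G X \<Longrightarrow> inv x \<in> sch_labels G X"
  unfolding sch_labels_def by auto

lemma finite_sch_labels:
  assumes "finite X" shows "finite (sch_labels G X)"
proof -
  have "sch_labels G X \<subseteq> X \<union> (\<lambda>x. inv x) ` X"
    unfolding sch_labels_def by (force intro: image_eqI[where x = "inv _"])
  then show ?thesis using assms finite_subset by blast
qed

lemma cayley_ball_carrier: "L \<subseteq> carrier G \<Longrightarrow> cayley_ball G L n \<subseteq> carrier G"
  by (induction n) auto

lemma finite_cayley_ball: "finite L \<Longrightarrow> finite (cayley_ball G L n)"
  by (induction n) auto

lemma cayley_ball_mono: "m \<le> n \<Longrightarrow> cayley_ball G L m \<subseteq> cayley_ball G L n"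
  by (induction n rule: dec_induct) auto

lemma one_in_cayley_ball: "\<one> \<in> cayley_ball G L n"
  using cayley_ball_mono[of 0 n L] by auto

lemma cayley_ball_mult:
  assumes L: "L \<subseteq> carrier G" and a: "a \<in> cayley_ball G L m"
  shows "b \<in> cayley_ball G L n \<Longrightarrow> a \<otimes> b \<in> cayley_ball G L (m + n)"
proof (induction n arbitrary: b)
  case 0
  have "a \<in> carrier G" using a cayley_ball_carrier[OF L] by blast
  then show ?case using 0 a by simp
next
  case (Suc n)
  from Suc.prems consider "b \<in> cayley_ball G L n"
    | w x where "w \<in> cayley_ball G L n" "x \<in> L" "b = w \<otimes> x" by auto
  then show ?case
  proof cases
    case 1
    then show ?thesis using Suc.IH by auto
  next
    case 2
    have "a \<in> carrier G" "w \<in> carrier G" "x \<in> carrier G"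
      using 2 a L cayley_ball_carrier[OF L] by blast+
    then have "a \<otimes> b = (a \<otimes> w) \<otimes> x" using 2 by (simp add: m_assoc)
    then show ?thesis using Suc.IH 2 by auto
  qed
qed

lemma generate_in_cayley_ball:
  assumes X: "X \<subseteq> carrier G" and g: "g \<in> generate G X"
  shows "\<exists>n. g \<in> cayley_ball G (sch_labels G X) n"
  using g
proof (induction rule: generate.induct)
  case one
  then show ?case using one_in_cayley_ball by blast
next
  case (incl h)
  have "h \<in> sch_labels G X" using incl X by (auto simp: sch_labels_def)
  then have "\<one> \<otimes> h \<in> cayley_ball G (sch_labels G X) 1" by auto
  then show ?case using incl X l_one by (metis subsetD)
next
  case (inv h)
  have "inv h \<in> sch_labels G X" using inv X by (auto simp: sch_labels_def)
  then have "\<one> \<otimes> inv h \<in> cayley_ball G (sch_labels G X) 1" by auto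
  then show ?case using inv X l_one inv_closed by (metis subsetD)
next
  case (eng h1 h2)
  then show ?case using cayley_ball_mult[OF sch_labels_carrier] by blast
qed

lemma sch_V_subset_carrier: "subgroup K G \<Longrightarrow> v \<in> sch_V G K \<Longrightarrow> v \<subseteq> carrier G"
  unfolding sch_V_def RCOSETS_def using r_coset_subset_G[OF subgroup.subset] by blast

lemma rcos_in_sch_V: "subgroup K G \<Longrightarrow> g \<in> carrier G \<Longrightarrow> K #> g \<in> sch_V G K"
  unfolding sch_V_def using rcosetsI[OF subgroup.subset] by blast

lemma sch_VE:
  assumes "v \<in> sch_V G K"
  obtains g where "g \<in> carrier G" "v = K #> g"
  using assms unfolding sch_V_def RCOSETS_def by blast

lemma sch_V_rcos_mult:
  assumes K: "subgroup K G" and v: "v \<in> sch_V G K" and x: "x \<in> carrier G"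
  shows "v #> x \<in> sch_V G K"
proof -
  obtain g where g: "g \<in> carrier G" "v = K #> g" using v by (rule sch_VE)
  then have "v #> x = K #> (g \<otimes> x)" using coset_mult_assoc[OF subgroup.subset[OF K] g(1) x] by simp
  then show ?thesis using rcos_in_sch_V[OF K] g x by simp
qed

lemma infinite_sch_V:
  assumes K: "subgroup K G" "finite K" and G: "infinite (carrier G)"
  shows "infinite (sch_V G K)"
proof
  assume "finite (sch_V G K)"
  moreover have "finite v" if v: "v \<in> sch_V G K" for v
  proof -
    obtain g where "v = K #> g" using v by (rule sch_VE)
    then have "v = (\<lambda>k. k \<otimes> g) ` K" unfolding r_coset_def by auto
    then show ?thesis using K(2) by simp
  qed
  ultimately have "finite (\<Union> (sch_V G K))" by blast
  then show False using rcosets_part_G[OF K(1)] G unfolding sch_V_def by simp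
qed

lemma sch_rev_in_E:
  assumes K: "subgroup K G" and e: "e \<in> sch_E G K X"
  shows "sch_rev G e \<in> sch_E G K X"
proof -
  have "fst e \<in> sch_V G K" "snd e \<in> sch_labels G X" using e by (auto simp: sch_E_def)
  moreover have "snd e \<in> carrier G" using \<open>snd e \<in> sch_labels G X\<close> sch_labels_carrier by blast
  ultimately show ?thesis using sch_V_rcos_mult[OF K] sch_labels_inv by (simp add: sch_E_def sch_rev_def)
qed

lemma sch_aut_vertex: "(f, h) \<in> sch_aut G K X \<Longrightarrow> v \<in> sch_V G K \<Longrightarrow> f v \<in> sch_V G K"
  unfolding sch_aut_def using bij_betwE by blast

lemma sch_aut_term:
  assumes K: "subgroup K G" and fh: "(f, h) \<in> sch_aut G K X" and e: "e \<in> sch_E G K X"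
  shows "sch_term G (h e) = f (sch_term G e)"
proof -
  have term_rev: "sch_term G e' = sch_orig (sch_rev G e')" for e'
    by (simp add: sch_term_def sch_orig_def sch_rev_def)
  have compat: "sch_orig (h e') = f (sch_orig e')" "sch_rev G (h e') = h (sch_rev G e')"
    if "e' \<in> sch_E G K X" for e'
    using fh that unfolding sch_aut_def by auto
  show ?thesis
    using compat(1)[OF sch_rev_in_E[OF K e]] compat(2)[OF e] by (simp add: term_rev)
qed

lemma sch_aut_out_edges:
  assumes fh: "(f, h) \<in> sch_aut G K X" and u: "u \<in> sch_V G K"
  shows "h ` ({u} \<times> sch_labels G X) = {f u} \<times> sch_labels G X"
proof -
  have bf: "bij_betw f (sch_V G K) (sch_V G K)" and bh: "bij_betw h (sch_E G K X) (sch_E G K X)"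
    and orig: "\<And>e. e \<in> sch_E G K X \<Longrightarrow> fst (h e) = f (fst e)"
    using fh unfolding sch_aut_def sch_orig_def by auto
  have out: "{v} \<times> sch_labels G X = {e \<in> sch_E G K X. fst e = v}" if "v \<in> sch_V G K" for v
    using that unfolding sch_E_def by auto
  have fu: "f u \<in> sch_V G K" using sch_aut_vertex[OF fh u] .
  have "h ` {e \<in> sch_E G K X. fst e = u} = {e \<in> sch_E G K X. fst e = f u}"
  proof (intro equalityI subsetI)
    fix e' assume "e' \<in> h ` {e \<in> sch_E G K X. fst e = u}"
    then show "e' \<in> {e \<in> sch_E G K X. fst e = f u}" using bij_betwE[OF bh] orig by auto
  next
    fix e' assume e': "e' \<in> {e \<in> sch_E G K X. fst e = f u}"
    then obtain e where e: "e \<in> sch_E G K X" "e' = h e"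
      using bij_betw_imp_surj_on[OF bh] by blast
    have "fst e \<in> sch_V G K" using e(1) unfolding sch_E_def by auto
    then have "fst e = u" using e e' orig u bij_betw_imp_inj_on[OF bf] by (auto dest: inj_onD)
    then show "e' \<in> h ` {e \<in> sch_E G K X. fst e = u}" using e by blast
  qed
  then show ?thesis using out[OF u] out[OF fu] by simp
qed

lemma sch_aut_nbrs:
  assumes K: "subgroup K G" and fh: "(f, h) \<in> sch_aut G K X" and u: "u \<in> sch_V G K"
  shows "f ` sch_nbrs G X u = sch_nbrs G X (f u)"
proof -
  have nbrs: "sch_nbrs G X v = sch_term G ` ({v} \<times> sch_labels G X)" for v
    by (force simp: sch_nbrs_def sch_term_def)
  have "{u} \<times> sch_labels G X \<subseteq> sch_E G K X" using u unfolding sch_E_def by auto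
  then have "f ` sch_term G ` ({u} \<times> sch_labels G X) = sch_term G ` h ` ({u} \<times> sch_labels G X)"
    using sch_aut_term[OF K fh] by (force simp: image_image intro!: image_cong)
  then show ?thesis using sch_aut_out_edges[OF fh u] by (simp add: nbrs)
qed

lemma sch_ball_subset_V:
  assumes K: "subgroup K G" and v: "v \<in> sch_V G K"
  shows "sch_ball G X v n \<subseteq> sch_V G K"
  by (induction n)
    (auto simp: v sch_nbrs_def intro!: sch_V_rcos_mult[OF K] dest: subsetD[OF sch_labels_carrier])

lemma sch_aut_ball:
  assumes K: "subgroup K G" and fh: "(f, h) \<in> sch_aut G K X" and u: "u \<in> sch_V G K"
  shows "f ` sch_ball G X u n = sch_ball G X (f u) n"
proof (induction n)
  case (Suc n)
  let ?B = "sch_ball G X u n"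
  have "f ` \<Union> (sch_nbrs G X ` ?B) = (\<Union>v\<in>?B. f ` sch_nbrs G X v)" by (simp add: image_UN)
  also have "\<dots> = (\<Union>v\<in>?B. sch_nbrs G X (f v))"
    using sch_aut_nbrs[OF K fh] sch_ball_subset_V[OF K u] by (metis (no_types, lifting) SUP_cong subsetD)
  also have "\<dots> = \<Union> (sch_nbrs G X ` f ` ?B)" by (simp add: image_image)
  finally show ?case using Suc by (simp add: image_Un)
qed simp

lemma sch_aut_card_ball:
  assumes K: "subgroup K G" and fh: "(f, h) \<in> sch_aut G K X" and v: "v \<in> sch_V G K"
  shows "card (sch_ball G X (f v) n) = card (sch_ball G X v n)"
proof -
  have "inj_on f (sch_V G K)" using fh unfolding sch_aut_def by (auto simp: bij_betw_def)
  then have "inj_on f (sch_ball G X v n)" using sch_ball_subset_V[OF K v] by (rule inj_on_subset)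
  from card_image[OF this] show ?thesis using sch_aut_ball[OF K fh v] by simp
qed

lemma sch_ball_eq_image:
  assumes v: "v \<subseteq> carrier G"
  shows "sch_ball G X v n = (\<lambda>w. v #> w) ` cayley_ball G (sch_labels G X) n"
proof (induction n)
  case 0
  then show ?case using v by simp
next
  case (Suc n)
  have "v #> w #> x = v #> (w \<otimes> x)" if "w \<in> cayley_ball G (sch_labels G X) n" "x \<in> sch_labels G X" for w x
    using that v coset_mult_assoc cayley_ball_carrier[OF sch_labels_carrier] sch_labels_carrier by blast
  then show ?case by (auto simp: Suc sch_nbrs_def image_Un image_UN image_image)
qed

lemma finite_sch_ball:
  "finite X \<Longrightarrow> v \<subseteq> carrier G \<Longrightarrow> finite (sch_ball G X v n)"
  by (simp add: sch_ball_eq_image finite_cayley_ball finite_sch_labels)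

lemma card_sch_ball_rcos_less_iff:
  assumes K: "subgroup K G" and X: "finite X" and g: "g \<in> carrier G"
  shows "card (sch_ball G X (K #> g) r) < card (cayley_ball G (sch_labels G X) r) \<longleftrightarrow>
    (\<exists>a\<in>cayley_ball G (sch_labels G X) r. \<exists>b\<in>cayley_ball G (sch_labels G X) r.
      a \<noteq> b \<and> g \<otimes> (a \<otimes> inv b) \<otimes> inv g \<in> K)"
  (is "_ \<longleftrightarrow> (\<exists>a\<in>?B. \<exists>b\<in>?B. _)")
proof -
  let ?f = "\<lambda>w. K #> (g \<otimes> w)"
  have B: "finite ?B" "?B \<subseteq> carrier G"
    using finite_cayley_ball[OF finite_sch_labels[OF X]] cayley_ball_carrier[OF sch_labels_carrier]
    by auto
  have Kc: "K \<subseteq> carrier G" using subgroup.subset[OF K] .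
  have "sch_ball G X (K #> g) r = (\<lambda>w. K #> g #> w) ` ?B"
    using sch_ball_eq_image[OF r_coset_subset_G[OF Kc g]] by simp
  also have "\<dots> = ?f ` ?B"
    using coset_mult_assoc[OF Kc g] B(2) by (intro image_cong) auto
  finally have ball: "sch_ball G X (K #> g) r = ?f ` ?B" .
  have "card (sch_ball G X (K #> g) r) < card ?B \<longleftrightarrow> \<not> inj_on ?f ?B"
    unfolding ball using card_image_le[OF B(1), of ?f] inj_on_iff_eq_card[OF B(1), of ?f] by linarith
  also have "\<dots> \<longleftrightarrow> (\<exists>a\<in>?B. \<exists>b\<in>?B. a \<noteq> b \<and> ?f a = ?f b)"
    unfolding inj_on_def by blast
  also have "\<dots> \<longleftrightarrow> (\<exists>a\<in>?B. \<exists>b\<in>?B. a \<noteq> b \<and> g \<otimes> (a \<otimes> inv b) \<otimes> inv g \<in> K)"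
  proof -
    have "?f a = ?f b \<longleftrightarrow> g \<otimes> (a \<otimes> inv b) \<otimes> inv g \<in> K" if "a \<in> ?B" "b \<in> ?B" for a b
    proof -
      have ab: "a \<in> carrier G" "b \<in> carrier G" using that B(2) by blast+
      then have "(g \<otimes> a) \<otimes> inv (g \<otimes> b) = g \<otimes> (a \<otimes> inv b) \<otimes> inv g"
        using g by (simp add: m_assoc inv_mult_group)
      then show ?thesis using rcos_eq_iff_mult_inv_mem[OF K] ab g by simp
    qed
    then show ?thesis by blast
  qed
  finally show ?thesis .
qed

lemma sch_aut_inv_into:
  assumes K: "subgroup K G" and fh: "(f, h) \<in> sch_aut G K X"
  shows "(inv_into (sch_V G K) f, inv_into (sch_E G K X) h) \<in> sch_aut G K X"
proof -
  let ?V = "sch_V G K" and ?E = "sch_E G K X"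
  have bf: "bij_betw f ?V ?V" and bh: "bij_betw h ?E ?E"
    and compat: "\<And>e. e \<in> ?E \<Longrightarrow> sch_orig (h e) = f (sch_orig e) \<and> sch_rev G (h e) = h (sch_rev G e)"
    using fh unfolding sch_aut_def by auto
  have "sch_orig (inv_into ?E h e) = inv_into ?V f (sch_orig e) \<and>
        sch_rev G (inv_into ?E h e) = inv_into ?E h (sch_rev G e)" if e: "e \<in> ?E" for e
  proof -
    define e' where "e' = inv_into ?E h e"
    have e': "e' \<in> ?E" "h e' = e"
      unfolding e'_def using bij_betwE[OF bij_betw_inv_into[OF bh]] e bij_betw_inv_into_right[OF bh] by auto
    have "sch_orig e' \<in> ?V" using e'(1) unfolding sch_E_def sch_orig_def by auto
    then have "inv_into ?V f (sch_orig e) = sch_orig e'"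
      using compat[OF e'(1)] e'(2) bij_betw_inv_into_left[OF bf] by metis
    moreover have "inv_into ?E h (sch_rev G e) = sch_rev G e'"
      using compat[OF e'(1)] e'(2) bij_betw_inv_into_left[OF bh sch_rev_in_E[OF K e'(1)]] by metis
    ultimately show ?thesis by (simp add: e'_def)
  qed
  then show ?thesis unfolding sch_aut_def using bij_betw_inv_into[OF bf] bij_betw_inv_into[OF bh] by auto
qed

lemma sch_orbit_inv:
  assumes K: "subgroup K G" and fh: "(f, h) \<in> sch_aut G K X" and v: "v \<in> sch_V G K"
  shows "v \<in> sch_orbit G K X (f v)"
proof -
  have "bij_betw f (sch_V G K) (sch_V G K)" using fh unfolding sch_aut_def by auto
  then have "inv_into (sch_V G K) f (f v) = v" using v by (simp add: bij_betw_inv_into_left)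
  then show ?thesis using sch_aut_inv_into[OF K fh] unfolding sch_orbit_def by blast
qed

lemma sch_not_almost_transitive_if_finite_orbits:
  assumes K: "subgroup K G" and inf: "infinite (sch_V G K)"
    and orbits: "\<forall>v\<in>sch_V G K. finite (sch_orbit G K X v)"
  shows "\<not> sch_almost_transitive G K X"
proof
  assume "sch_almost_transitive G K X"
  then obtain V0 where V0: "finite V0" "V0 \<subseteq> sch_V G K"
    and to_V0: "\<forall>v\<in>sch_V G K. \<exists>(f, h)\<in>sch_aut G K X. f v \<in> V0"
    unfolding sch_almost_transitive_def by blast
  have "sch_V G K \<subseteq> (\<Union>w\<in>V0. sch_orbit G K X w)"
  proof
    fix v assume v: "v \<in> sch_V G K"
    then obtain f h where "(f, h) \<in> sch_aut G K X" "f v \<in> V0" using to_V0 by blast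
    then show "v \<in> (\<Union>w\<in>V0. sch_orbit G K X w)" using sch_orbit_inv[OF K _ v] by blast
  qed
  moreover have "finite (\<Union>w\<in>V0. sch_orbit G K X w)" using V0 orbits by blast
  ultimately show False using inf finite_subset by blast
qed

lemma sch_vertex_transitive_imp_almost_transitive:
  assumes K: "subgroup K G" and "sch_vertex_transitive G K X"
  shows "sch_almost_transitive G K X"
proof -
  have KV: "K \<in> sch_V G K" using rcos_in_sch_V[OF K one_closed] subgroup.subset[OF K] by simp
  have "\<exists>(f, h)\<in>sch_aut G K X. f v \<in> {K}" if "v \<in> sch_V G K" for v
  proof -
    have "\<exists>(f, h)\<in>sch_aut G K X. f v = K"
      using assms(2) KV that unfolding sch_vertex_transitive_def by simp
    then show ?thesis by auto
  qed
  then show ?thesis unfolding sch_almost_transitive_def using KV by (intro exI[of _ "{K}"]) simp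
qed

lemma sch_aut_lab_edge:
  assumes fh: "(f, h) \<in> sch_aut_lab G K X" and e: "e \<in> sch_E G K X"
  shows "h e = (f (fst e), snd e)"
proof -
  have "sch_orig (h e) = f (sch_orig e)" "sch_label (h e) = sch_label e"
    using fh e unfolding sch_aut_lab_def sch_aut_def by auto
  then show ?thesis by (simp add: sch_orig_def sch_label_def prod_eq_iff)
qed

lemma sch_aut_lab_rcos_mult:
  assumes K: "subgroup K G" and X: "X \<subseteq> carrier G" and fh: "(f, h) \<in> sch_aut_lab G K X"
    and u: "u \<in> sch_V G K" and g: "g \<in> generate G X"
  shows "f (u #> g) = f u #> g"
proof -
  have aut: "(f, h) \<in> sch_aut G K X" using fh unfolding sch_aut_lab_def by blast
  have fV: "f v \<in> sch_V G K" if "v \<in> sch_V G K" for v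
    using sch_aut_vertex[OF aut that] .
  have step: "f (v #> x) = f v #> x" if v: "v \<in> sch_V G K" and x: "x \<in> sch_labels G X" for v x
  proof -
    have e: "(v, x) \<in> sch_E G K X" using v x unfolding sch_E_def by simp
    show ?thesis
      using sch_aut_term[OF K aut e] sch_aut_lab_edge[OF fh e] by (simp add: sch_term_def)
  qed
  show ?thesis
    using g u
  proof (induction g arbitrary: u rule: generate.induct)
    case one
    then show ?case using sch_V_subset_carrier[OF K] fV by simp
  next
    case (incl x)
    then show ?case using step X by (auto simp: sch_labels_def)
  next
    case (inv x)
    then show ?case using step X by (auto simp: sch_labels_def)
  next
    case (eng g1 g2)
    have g: "g1 \<in> carrier G" "g2 \<in> carrier G" using eng.hyps generate_incl[OF X] by blast+
    have "f (u #> (g1 \<otimes> g2)) = f (u #> g1 #> g2)"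
      using coset_mult_assoc[OF sch_V_subset_carrier[OF K eng.prems] g] by simp
    also have "\<dots> = f u #> g1 #> g2"
      using eng.IH(2)[OF sch_V_rcos_mult[OF K eng.prems g(1)]] eng.IH(1)[OF eng.prems] by simp
    also have "\<dots> = f u #> (g1 \<otimes> g2)"
      using coset_mult_assoc[OF sch_V_subset_carrier[OF K fV[OF eng.prems]] g] by simp
    finally show ?case .
  qed
qed

section \<open>Schreier graphs of Tarski monsters\<close>

lemma tarski_monster_sch_aut_lab_trivial:
  assumes tm: "tarski_monster G p" and K: "subgroup K G" "K \<noteq> {\<one>}" "K \<noteq> carrier G"
    and X: "gen_system G X" and fh: "(f, h) \<in> sch_aut_lab G K X"
  shows "(\<forall>v\<in>sch_V G K. f v = v) \<and> (\<forall>e\<in>sch_E G K X. h e = e)"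
proof -
  have Xc: "X \<subseteq> carrier G" and gen: "generate G X = carrier G"
    using X unfolding gen_system_def by auto
  have Kc: "K \<subseteq> carrier G" using subgroup.subset[OF K(1)] .
  have KV: "K \<in> sch_V G K" using rcos_in_sch_V[OF K(1) one_closed] Kc by simp
  have shift: "f (K #> g) = f K #> g" if "g \<in> carrier G" for g
    using sch_aut_lab_rcos_mult[OF K(1) Xc fh KV] gen that by simp
  have "f K \<in> sch_V G K"
    using sch_aut_vertex[OF _ KV] fh unfolding sch_aut_lab_def by blast
  then obtain t where t: "t \<in> carrier G" "f K = K #> t" by (rule sch_VE)
  obtain k where k: "k \<in> K" "k \<noteq> \<one>" using K(2) subgroup.one_closed[OF K(1)] by blast
  have kc: "k \<in> carrier G" using k(1) Kc by blast
  have "K #> (t \<otimes> k) = K #> t"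
    using shift[OF kc] t coset_join2[OF kc K(1) k(1)] coset_mult_assoc[OF Kc t(1) kc] by simp
  then have "t \<otimes> k \<otimes> inv t \<in> K" using rcos_eq_iff_mult_inv_mem[OF K(1) m_closed[OF t(1) kc] t(1)] by simp
  then have "t \<in> K" using tarski_monster_malnormal[OF tm K t(1) k] by simp
  then have fK: "f K = K" using t coset_join2[OF t(1) K(1)] by simp
  have fix_V: "\<forall>v\<in>sch_V G K. f v = v"
    using shift fK by (auto elim!: sch_VE)
  moreover have "\<forall>e\<in>sch_E G K X. h e = e"
    using sch_aut_lab_edge[OF fh] fix_V by (auto simp: sch_E_def)
  ultimately show ?thesis ..
qed

lemma tarski_monster_finite_small_balls:
  assumes tm: "tarski_monster G p" and K: "subgroup K G" "K \<noteq> {\<one>}" "K \<noteq> carrier G"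
    and X: "finite X"
  shows "finite {v \<in> sch_V G K. card (sch_ball G X v r) < card (cayley_ball G (sch_labels G X) r)}"
    (is "finite ?S")
proof -
  let ?B = "cayley_ball G (sch_labels G X) r"
  have B: "finite ?B" "?B \<subseteq> carrier G"
    using finite_cayley_ball[OF finite_sch_labels[OF X]] cayley_ball_carrier[OF sch_labels_carrier]
    by auto
  define C where "C = (\<lambda>(a, b). a \<otimes> inv b) ` (?B \<times> ?B)"
  have C: "finite C" "C \<subseteq> carrier G" unfolding C_def using B by auto
  have "?S \<subseteq> {K #> g | g c. g \<in> carrier G \<and> c \<in> C \<and> c \<noteq> \<one> \<and> g \<otimes> c \<otimes> inv g \<in> K}"
  proof
    fix v assume "v \<in> ?S"
    then have v: "v \<in> sch_V G K" and small: "card (sch_ball G X v r) < card ?B" by auto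
    obtain g where g: "g \<in> carrier G" "v = K #> g" using v by (rule sch_VE)
    then obtain a b where ab: "a \<in> ?B" "b \<in> ?B" "a \<noteq> b" "g \<otimes> (a \<otimes> inv b) \<otimes> inv g \<in> K"
      using small card_sch_ball_rcos_less_iff[OF K(1) X g(1)] by blast
    have "a \<otimes> inv b \<noteq> \<one>" using ab(1-3) B(2) inv_solve_right'[of \<one> a b] by auto
    moreover have "a \<otimes> inv b \<in> C" unfolding C_def using ab(1,2) by auto
    ultimately show "v \<in> {K #> g | g c. g \<in> carrier G \<and> c \<in> C \<and> c \<noteq> \<one> \<and> g \<otimes> c \<otimes> inv g \<in> K}"
      using g ab(4) by blast
  qed
  then show ?thesis using tarski_monster_finite_conj_rcosets[OF tm K C] finite_subset by blast
qed

lemma tarski_monster_finite_sch_orbit: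
  assumes tm: "tarski_monster G p" and K: "subgroup K G" "K \<noteq> {\<one>}" "K \<noteq> carrier G"
    and X: "finite X" "gen_system G X" and v: "v \<in> sch_V G K"
  shows "finite (sch_orbit G K X v)"
proof -
  let ?B = "cayley_ball G (sch_labels G X)"
  have Xc: "X \<subseteq> carrier G" and gen: "generate G X = carrier G"
    using X(2) unfolding gen_system_def by auto
  have Kc: "K \<subseteq> carrier G" using subgroup.subset[OF K(1)] .
  obtain k where k: "k \<in> K" "k \<noteq> \<one>" using K(2) subgroup.one_closed[OF K(1)] by blast
  have kc: "k \<in> carrier G" using k(1) Kc by blast
  obtain r where r: "k \<in> ?B r" using generate_in_cayley_ball[OF Xc] gen kc by blast
  define S where "S = {v \<in> sch_V G K. card (sch_ball G X v r) < card (?B r)}"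
  have "finite S" unfolding S_def by (rule tarski_monster_finite_small_balls[OF tm K X(1)])
  have KV: "K \<in> sch_V G K" using rcos_in_sch_V[OF K(1) one_closed] Kc by simp
  have "\<one> \<otimes> (k \<otimes> inv \<one>) \<otimes> inv \<one> \<in> K" using k(1) kc by simp
  then have "card (sch_ball G X (K #> \<one>) r) < card (?B r)"
    using card_sch_ball_rcos_less_iff[OF K(1) X(1) one_closed] one_in_cayley_ball r k(2) by blast
  then have "K \<in> S" unfolding S_def using KV Kc by simp
  have aut_S: "f s \<in> S" if fh: "(f, h) \<in> sch_aut G K X" and s: "s \<in> S" for f h s
    using s sch_aut_vertex[OF fh] sch_aut_card_ball[OF K(1) fh] unfolding S_def by auto
  obtain g where g: "g \<in> carrier G" "v = K #> g" using v by (rule sch_VE)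
  obtain d where d: "g \<in> ?B d" using generate_in_cayley_ball[OF Xc] gen g(1) by blast
  have "v \<in> sch_ball G X K d" using sch_ball_eq_image[OF Kc] d g(2) by simp
  have "sch_orbit G K X v \<subseteq> (\<Union>s\<in>S. sch_ball G X s d)"
  proof
    fix z assume "z \<in> sch_orbit G K X v"
    then obtain f h where fh: "(f, h) \<in> sch_aut G K X" "z = f v" unfolding sch_orbit_def by blast
    have "z \<in> sch_ball G X (f K) d"
      using sch_aut_ball[OF K(1) fh(1) KV] \<open>v \<in> sch_ball G X K d\<close> fh(2) by blast
    then show "z \<in> (\<Union>s\<in>S. sch_ball G X s d)" using aut_S[OF fh(1) \<open>K \<in> S\<close>] by blast
  qed
  moreover have "finite (\<Union>s\<in>S. sch_ball G X s d)"
    using \<open>finite S\<close> finite_sch_ball[OF X(1) sch_V_subset_carrier[OF K(1)]] unfolding S_def by blast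
  ultimately show ?thesis using finite_subset by blast
qed

lemma tarski_monster_not_sch_almost_transitive:
  assumes tm: "tarski_monster G p" and K: "subgroup K G" "K \<noteq> {\<one>}" "K \<noteq> carrier G"
    and X: "finite X" "gen_system G X"
  shows "\<not> sch_almost_transitive G K X"
proof (rule sch_not_almost_transitive_if_finite_orbits[OF K(1)])
  show "infinite (sch_V G K)"
    using infinite_sch_V[OF K(1) tarski_monster_subgroup_card(1)[OF tm K] tarski_monster_infinite[OF tm]] .
  show "\<forall>v\<in>sch_V G K. finite (sch_orbit G K X v)"
    using tarski_monster_finite_sch_orbit[OF tm K X] by blast
qed

lemma tarski_monster_strongly_simple:
  assumes tm: "tarski_monster G p" and X: "finite X" "gen_system G X"
  shows "strongly_simple G"
  unfolding strongly_simple_def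
proof (intro conjI allI impI)
  show "fin_generated G" using X unfolding fin_generated_def by blast
next
  fix Y H
  assume "finite Y \<and> gen_system G Y \<and> card Y \<le> group_rank G + 1 \<and>
    subgroup H G \<and> H \<noteq> {\<one>} \<and> H \<noteq> carrier G"
  then have Y: "finite Y" "gen_system G Y" and H: "subgroup H G" "H \<noteq> {\<one>}" "H \<noteq> carrier G"
    by auto
  show "\<not> sch_vertex_transitive G H Y"
    using tarski_monster_not_sch_almost_transitive[OF tm H Y]
      sch_vertex_transitive_imp_almost_transitive[OF H(1)] by blast
qed

end

theorem proposition6p8:
  fixes G :: "('a, 'b) monoid_scheme" and p :: nat and X K :: "'a set"
  assumes "tarski_monster G p"
    and "finite X" and "gen_system G X"
    and "subgroup K G" and "K \<noteq> {\<one>\<^bsub>G\<^esub>}" and "K \<noteq> carrier G"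
  shows "(\<forall>(f, h)\<in>sch_aut_lab G K X.
            (\<forall>v\<in>sch_V G K. f v = v) \<and> (\<forall>e\<in>sch_E G K X. h e = e))
       \<and> (\<forall>v\<in>sch_V G K. finite (sch_orbit G K X v))
       \<and> \<not> sch_almost_transitive G K X
       \<and> strongly_simple G"
proof -
  interpret group G by (rule tarski_monster_group[OF assms(1)])
  show ?thesis
    using tarski_monster_sch_aut_lab_trivial[OF assms(1,4-6,3)]
      tarski_monster_finite_sch_orbit[OF assms(1,4-6,2,3)]
      tarski_monster_not_sch_almost_transitive[OF assms(1,4-6,2,3)]
      tarski_monster_strongly_simple[OF assms(1-3)]
    by auto
qed

end
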